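(* Let $\alpha,\beta,\gamma,x$ be real numbers, $\lambda$ a nonnegative integer and $n$ a nonnegative integer. Then $$xA_{n}^{\lambda+1,x}(\alpha,\beta,\gamma+\beta)=(x+1)A_{n}^{\lambda+1,x}(\alpha,\beta,\gamma)-A_{n}^{\lambda,x}(\alpha,\beta,\gamma)$$ and $$A_{n+1}^{\lambda,x}(\alpha,\beta,\gamma-\alpha)-(x+1)\lambda\beta\, A_{n}^{\lambda+1,x}(\alpha,\beta,\gamma)=(\gamma-\alpha-\lambda\beta)A_{n}^{\lambda,x}(\alpha,\beta,\gamma).$$
   Context: For a number $t$ and $\alpha$, the generalised factorial is $(t|\alpha)_n=\prod_{j=0}^{n-1}(t-j\alpha)$ for $n\ge 1$ and $(t|\alpha)_0=1$. For parameters $\alpha,\beta,\gamma$, the generalised Stirling numbers $S(n,k,\alpha,\beta,\gamma)$ ($0\le k\le n$) are defined by the polynomial identity $(t|\alpha)_n=\sum_{k=0}^{n}S(n,k,\alpha,\beta,\gamma)\,(t-\gamma|\beta)_k$ in the variable $t$. For a nonnegative integer $\lambda$ put $\binom{k+\lambda-1}{k}=\lambda(\lambda+1)\cdots(\lambda+k-1)/k!$ (equal to $1$ for $k=0$). Define $$A^{\lambda,x}_n(\alpha,\beta,\gamma)=\sum_{k=0}^{n}\binom{k+\lambda-1}{k}(-1)^{n+k}\beta^k k!\,S(n,k,\alpha,-\beta,-\gamma)\,x^k .$$ (For $\alpha\neq0$ these have exponential generating function $\sum_n A^{\lambda,x}_n(\alpha,\beta,\gamma)t^n/n!=(1-\alpha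 t)^{-\gamma/\alpha}\big(1-x[(1-\alpha t)^{-\beta/\alpha}-1]\big)^{-\lambda}$.) *)

theory Defs
  imports Complex_Main
begin

definition gfact :: "real \<Rightarrow> real \<Rightarrow> nat \<Rightarrow> real" where
  "gfact t \<alpha> n = (\<Prod>j<n. t - real j * \<alpha>)"

text \<open>The coefficient family is extended by 0 for k > n so that it is unique.\<close>
definition gstirling :: "nat \<Rightarrow> nat \<Rightarrow> real \<Rightarrow> real \<Rightarrow> real \<Rightarrow> real" where
  "gstirling n k \<alpha> \<beta> \<gamma> =
     (THE c :: nat \<Rightarrow> real. (\<forall>i>n. c i = 0) \<and>
        (\<forall>t::real. gfact t \<alpha> n = (\<Sum>i=0..n. c i * gfact (t - \<gamma>) \<beta> i))) k"

text \<open>binom(k+lambda-1, k) = lambda(lambda+1)...(lambda+k-1)/k!\<close>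
definition multichoose :: "nat \<Rightarrow> nat \<Rightarrow> real" where
  "multichoose l k = pochhammer (real l) k / fact k"

definition A :: "nat \<Rightarrow> nat \<Rightarrow> real \<Rightarrow> real \<Rightarrow> real \<Rightarrow> real \<Rightarrow> real" where
  "A n l x \<alpha> \<beta> \<gamma> =
     (\<Sum>k=0..n. multichoose l k * (-1) ^ (n + k) * \<beta> ^ k * fact k
                * gstirling n k \<alpha> (-\<beta>) (-\<gamma>) * x ^ k)"

end

theory Submission
  imports Defs "HOL-Computational_Algebra.Polynomial"
begin

text \<open>Write A(n, \<lambda>) = \<Sum>k. binom(k+\<lambda>-1, k) D(n,k) x^k with
  D(n,k) = (-1)^(n+k) \<beta>^k k! S(n,k,\<alpha>,-\<beta>,-\<gamma>), which is A_coeff.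
  Multiplying the expansion of (t|\<alpha>)_n by t - n\<alpha> gives a triangular recurrence for the
  Stirling numbers, hence D(n+1,k) = k\<beta> D(n,k-1) + (\<gamma> + k\<beta> + n\<alpha>) D(n,k).
  By induction on n, replacing \<gamma> by \<gamma>+\<beta> turns D(n,k) into D(n,k) + D(n,k+1), and
  replacing \<gamma> by \<gamma>-\<alpha> turns D(n+1,k) into k\<beta> D(n,k-1) + (\<gamma> - \<alpha> + k\<beta>) D(n,k).
  Both identities then hold coefficientwise by the Pascal-type relations between the
  multiset coefficients binom(k+\<lambda>-1, k) for \<lambda> and \<lambda>+1.\<close>

text \<open>The recurrence comes from
  (t-\<gamma>|\<beta>)_k (t - n\<alpha>) = (t-\<gamma>|\<beta>)_(k+1) + (\<gamma> + k\<beta> - n\<alpha>) (t-\<gamma>|\<beta>)_k.\<close>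

fun gstirling_rec :: "real \<Rightarrow> real \<Rightarrow> real \<Rightarrow> nat \<Rightarrow> nat \<Rightarrow> real" where
  "gstirling_rec \<alpha> \<beta> \<gamma> 0 k = (if k = 0 then 1 else 0)"
| "gstirling_rec \<alpha> \<beta> \<gamma> (Suc n) 0 = (\<gamma> - real n * \<alpha>) * gstirling_rec \<alpha> \<beta> \<gamma> n 0"
| "gstirling_rec \<alpha> \<beta> \<gamma> (Suc n) (Suc k) = gstirling_rec \<alpha> \<beta> \<gamma> n k
     + (\<gamma> + real (Suc k) * \<beta> - real n * \<alpha>) * gstirling_rec \<alpha> \<beta> \<gamma> n (Suc k)"

lemma gstirling_rec_Suc:
  "gstirling_rec \<alpha> \<beta> \<gamma> (Suc n) k = (if k = 0 then 0 else gstirling_rec \<alpha> \<beta> \<gamma> n (k - 1))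
     + (\<gamma> + real k * \<beta> - real n * \<alpha>) * gstirling_rec \<alpha> \<beta> \<gamma> n k"
  by (cases k) auto

lemma gstirling_rec_eq_0: "n < k \<Longrightarrow> gstirling_rec \<alpha> \<beta> \<gamma> n k = 0"
  by (induction n arbitrary: k) (auto simp: gstirling_rec_Suc)

lemma gfact_Suc: "gfact t \<alpha> (Suc n) = gfact t \<alpha> n * (t - real n * \<alpha>)"
  by (simp add: gfact_def)

lemma gfact_eq_sum_gstirling_rec:
  "n < N \<Longrightarrow> gfact t \<alpha> n = (\<Sum>k<N. gstirling_rec \<alpha> \<beta> \<gamma> n k * gfact (t - \<gamma>) \<beta> k)"
proof (induction n arbitrary: N)
  case 0
  then show ?case by (simp add: gfact_def if_distrib[of "\<lambda>c. c * _"] cong: if_cong)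
next
  case (Suc n)
  then obtain M where N: "N = Suc M" and "n < M" by (cases N) auto
  let ?S = "gstirling_rec \<alpha> \<beta> \<gamma> n" and ?g = "gfact (t - \<gamma>) \<beta>"
  have "gfact t \<alpha> (Suc n) = (\<Sum>k<M. ?S k * ?g k * (t - real n * \<alpha>))"
    using Suc.IH[OF \<open>n < M\<close>] by (simp add: gfact_Suc sum_distrib_right)
  also have "\<dots> = (\<Sum>k<M. ?S k * ?g (Suc k)) + (\<Sum>k<M. (\<gamma> + real k * \<beta> - real n * \<alpha>) * ?S k * ?g k)"
    by (simp add: gfact_Suc sum.distrib[symmetric] algebra_simps)
  also have "\<dots> = (\<Sum>k<N. gstirling_rec \<alpha> \<beta> \<gamma> (Suc n) k * ?g k)"
  proof -
    have "(\<Sum>k<M. ?S k * ?g (Suc k)) = (\<Sum>k<N. (if k = 0 then 0 else ?S (k - 1)) * ?g k)"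
      unfolding N sum.lessThan_Suc_shift by simp
    moreover have "(\<Sum>k<M. (\<gamma> + real k * \<beta> - real n * \<alpha>) * ?S k * ?g k)
        = (\<Sum>k<N. (\<gamma> + real k * \<beta> - real n * \<alpha>) * ?S k * ?g k)"
      using gstirling_rec_eq_0[OF \<open>n < M\<close>] by (simp add: N)
    ultimately show ?thesis
      by (simp add: gstirling_rec_Suc sum.distrib[symmetric] algebra_simps)
  qed
  finally show ?case .
qed

definition gfact_poly :: "real \<Rightarrow> nat \<Rightarrow> real poly" where
  "gfact_poly \<beta> k = (\<Prod>j<k. [:- (real j * \<beta>), 1:])"

lemma poly_gfact_poly: "poly (gfact_poly \<beta> k) t = gfact t \<beta> k"
  by (simp add: gfact_poly_def gfact_def poly_prod)

lemma degree_gfact_poly: "degree (gfact_poly \<beta> k) = k"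
  unfolding gfact_poly_def by (subst degree_prod_eq_sum_degree) auto

lemma lead_coeff_gfact_poly: "lead_coeff (gfact_poly \<beta> k) = 1"
  unfolding gfact_poly_def lead_coeff_prod by simp

lemma gfact_linear_independent:
  assumes "\<And>t. (\<Sum>k<N. c k * gfact t \<beta> k) = 0" and "k < N"
  shows "c k = 0"
  using assms
proof (induction N arbitrary: k)
  case 0
  then show ?case by simp
next
  case (Suc N)
  define p where "p = (\<Sum>i<Suc N. smult (c i) (gfact_poly \<beta> i))"
  have "p = 0"
    using Suc.prems(1) poly_all_0_iff_0[of p] by (simp add: p_def poly_sum poly_gfact_poly)
  have "coeff p N = c N"
    using coeff_eq_0[of "gfact_poly \<beta> _" N]
    by (simp add: p_def coeff_sum degree_gfact_poly lead_coeff_gfact_poly[unfolded degree_gfact_poly])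
  with \<open>p = 0\<close> have "c N = 0" by simp
  with Suc.prems Suc.IH[of k] show ?case by (cases "k = N") auto
qed

lemma gstirling_eq_rec: "gstirling n k \<alpha> \<beta> \<gamma> = gstirling_rec \<alpha> \<beta> \<gamma> n k"
proof -
  let ?P = "\<lambda>c :: nat \<Rightarrow> real. (\<forall>i>n. c i = 0) \<and>
      (\<forall>t. gfact t \<alpha> n = (\<Sum>i=0..n. c i * gfact (t - \<gamma>) \<beta> i))"
  have sum_eq: "(\<Sum>i=0..n. c i * g i) = (\<Sum>i<Suc n. c i * g i)" for c g :: "nat \<Rightarrow> real"
    by (simp add: atLeast0AtMost lessThan_Suc_atMost)
  have "?P (gstirling_rec \<alpha> \<beta> \<gamma> n)"
    using gstirling_rec_eq_0 gfact_eq_sum_gstirling_rec[of n "Suc n"] by (simp add: sum_eq)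
  moreover have "c = gstirling_rec \<alpha> \<beta> \<gamma> n" if "?P c" for c
  proof
    fix i
    show "c i = gstirling_rec \<alpha> \<beta> \<gamma> n i"
    proof (cases "i \<le> n")
      case True
      have "(\<Sum>k<Suc n. (c k - gstirling_rec \<alpha> \<beta> \<gamma> n k) * gfact t \<beta> k) = 0" for t
        using that gfact_eq_sum_gstirling_rec[of n "Suc n" "t + \<gamma>" \<alpha> \<beta> \<gamma>]
        by (simp add: sum_eq algebra_simps sum_subtractf)
      with True show ?thesis using gfact_linear_independent[where N = "Suc n"] by fastforce
    next
      case False
      with that show ?thesis by (simp add: gstirling_rec_eq_0)
    qed
  qed
  ultimately have "(THE c. ?P c) = gstirling_rec \<alpha> \<beta> \<gamma> n"
    by (rule the_equality)
  then show ?thesis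
    by (simp add: gstirling_def)
qed

definition A_coeff :: "real \<Rightarrow> real \<Rightarrow> real \<Rightarrow> nat \<Rightarrow> nat \<Rightarrow> real" where
  "A_coeff \<alpha> \<beta> \<gamma> n k = (-1) ^ (n + k) * \<beta> ^ k * fact k * gstirling n k \<alpha> (-\<beta>) (-\<gamma>)"

lemma A_coeff_0: "A_coeff \<alpha> \<beta> \<gamma> 0 k = (if k = 0 then 1 else 0)"
  by (simp add: A_coeff_def gstirling_eq_rec)

lemma A_coeff_Suc:
  "A_coeff \<alpha> \<beta> \<gamma> (Suc n) k
     = real k * \<beta> * A_coeff \<alpha> \<beta> \<gamma> n (k - 1) + (\<gamma> + real k * \<beta> + real n * \<alpha>) * A_coeff \<alpha> \<beta> \<gamma> n k"
  by (cases k) (simp_all add: A_coeff_def gstirling_eq_rec algebra_simps)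

lemma A_coeff_eq_0: "n < k \<Longrightarrow> A_coeff \<alpha> \<beta> \<gamma> n k = 0"
  by (simp add: A_coeff_def gstirling_eq_rec gstirling_rec_eq_0)

lemma A_coeff_shift_beta:
  "A_coeff \<alpha> \<beta> (\<gamma> + \<beta>) n k = A_coeff \<alpha> \<beta> \<gamma> n k + A_coeff \<alpha> \<beta> \<gamma> n (Suc k)"
proof (induction n arbitrary: k)
  case 0
  then show ?case by (simp add: A_coeff_0)
next
  case (Suc n)
  then show ?case by (cases k) (simp_all add: A_coeff_Suc algebra_simps)
qed

lemma A_coeff_Suc_shift_alpha:
  "A_coeff \<alpha> \<beta> (\<gamma> - \<alpha>) (Suc n) k
     = real k * \<beta> * A_coeff \<alpha> \<beta> \<gamma> n (k - 1) + (\<gamma> - \<alpha> + real k * \<beta>) * A_coeff \<alpha> \<beta> \<gamma> n k"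
proof (induction n arbitrary: k)
  case 0
  then show ?case by (simp add: A_coeff_Suc A_coeff_0)
next
  case (Suc n)
  have "A_coeff \<alpha> \<beta> (\<gamma> - \<alpha>) (Suc (Suc n)) k
      = real k * \<beta> * A_coeff \<alpha> \<beta> (\<gamma> - \<alpha>) (Suc n) (k - 1)
        + (\<gamma> - \<alpha> + real k * \<beta> + real (Suc n) * \<alpha>) * A_coeff \<alpha> \<beta> (\<gamma> - \<alpha>) (Suc n) k"
    by (rule A_coeff_Suc)
  then show ?case
    unfolding Suc.IH by (cases k) (simp_all add: A_coeff_Suc algebra_simps)
qed

lemma A_eq_sum_A_coeff:
  assumes "n < N"
  shows "A n l x \<alpha> \<beta> \<gamma> = (\<Sum>k<N. multichoose l k * A_coeff \<alpha> \<beta> \<gamma> n k * x ^ k)"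
proof -
  have "A n l x \<alpha> \<beta> \<gamma> = (\<Sum>k<Suc n. multichoose l k * A_coeff \<alpha> \<beta> \<gamma> n k * x ^ k)"
    by (simp add: A_def A_coeff_def atLeast0AtMost lessThan_Suc_atMost mult_ac)
  also have "\<dots> = (\<Sum>k<N. multichoose l k * A_coeff \<alpha> \<beta> \<gamma> n k * x ^ k)"
    using assms by (intro sum.mono_neutral_left) (auto simp: A_coeff_eq_0)
  finally show ?thesis .
qed

lemma multichoose_0 [simp]: "multichoose l 0 = 1"
  by (simp add: multichoose_def)

lemma multichoose_Suc_diff:
  "multichoose (l + 1) (Suc k) - multichoose l (Suc k) = multichoose (l + 1) k"
proof -
  have "pochhammer (real (l + 1)) (Suc k) - pochhammer (real l) (Suc k)
      = real (Suc k) * pochhammer (real (l + 1)) k"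
    unfolding of_nat_add of_nat_1 pochhammer_rec[of "real l"] pochhammer_rec'[of "real l + 1"]
    by (simp add: algebra_simps)
  then show ?thesis
    unfolding multichoose_def diff_divide_distrib[symmetric] by simp
qed

lemma multichoose_Suc_mult:
  "real (Suc k) * multichoose l (Suc k) = real l * multichoose (l + 1) k"
  unfolding multichoose_def of_nat_add of_nat_1 pochhammer_rec[of "real l"] by simp

lemma multichoose_mult:
  "(real k + real l) * multichoose l k = real l * multichoose (l + 1) k"
proof (cases k)
  case (Suc j)
  have "(real k + real l) * pochhammer (real l) k = real l * pochhammer (real (l + 1)) k"
    unfolding Suc of_nat_add of_nat_1 pochhammer_rec[of "real l"] pochhammer_rec'[of "real l + 1"]
    by (simp add: algebra_simps)
  then show ?thesis
    unfolding multichoose_def by (metis times_divide_eq_right)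
qed (simp add: multichoose_def)

lemma A_shift_beta:
  "x * A n (l + 1) x \<alpha> \<beta> (\<gamma> + \<beta>) = (x + 1) * A n (l + 1) x \<alpha> \<beta> \<gamma> - A n l x \<alpha> \<beta> \<gamma>"
proof -
  define N where "N = Suc (Suc n)"
  have "n < N" by (simp add: N_def)
  let ?c = "A_coeff \<alpha> \<beta> \<gamma> n" and ?m = "multichoose (l + 1)"
  have lhs: "x * A n (l + 1) x \<alpha> \<beta> (\<gamma> + \<beta>) =
      (\<Sum>k<N. ?m k * ?c k * x ^ Suc k) + (\<Sum>k<N. ?m k * ?c (Suc k) * x ^ Suc k)"
    unfolding A_eq_sum_A_coeff[OF \<open>n < N\<close>] A_coeff_shift_beta
    by (simp add: sum_distrib_left sum.distrib[symmetric] algebra_simps)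
  have rhs: "(x + 1) * A n (l + 1) x \<alpha> \<beta> \<gamma> - A n l x \<alpha> \<beta> \<gamma> =
      (\<Sum>k<N. ?m k * ?c k * x ^ Suc k) + (\<Sum>k<N. (?m k - multichoose l k) * ?c k * x ^ k)"
    by (simp add: A_eq_sum_A_coeff[OF \<open>n < N\<close>] sum_distrib_left
        sum.distrib[symmetric] sum_subtractf[symmetric] algebra_simps)
  have "(\<Sum>k<N. (?m k - multichoose l k) * ?c k * x ^ k) = (\<Sum>k<Suc n. ?m k * ?c (Suc k) * x ^ Suc k)"
    unfolding N_def sum.lessThan_Suc_shift[of _ "Suc n"] multichoose_Suc_diff by simp
  also have "\<dots> = (\<Sum>k<N. ?m k * ?c (Suc k) * x ^ Suc k)"
    by (simp add: N_def A_coeff_eq_0)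
  finally show ?thesis using lhs rhs by simp
qed

lemma A_Suc_shift_alpha:
  "A (n + 1) l x \<alpha> \<beta> (\<gamma> - \<alpha>) - (x + 1) * real l * \<beta> * A n (l + 1) x \<alpha> \<beta> \<gamma>
     = (\<gamma> - \<alpha> - real l * \<beta>) * A n l x \<alpha> \<beta> \<gamma>"
proof -
  define N where "N = Suc (Suc n)"
  have "n < N" "n + 1 < N" by (simp_all add: N_def)
  let ?c = "A_coeff \<alpha> \<beta> \<gamma> n" and ?m = "multichoose l"
  have "A (n + 1) l x \<alpha> \<beta> (\<gamma> - \<alpha>) =
      (\<Sum>k<N. real k * ?m k * \<beta> * ?c (k - 1) * x ^ k)
      + (\<Sum>k<N. ?m k * (\<gamma> - \<alpha> + real k * \<beta>) * ?c k * x ^ k)"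
    unfolding A_eq_sum_A_coeff[OF \<open>n + 1 < N\<close>]
    unfolding Suc_eq_plus1[symmetric] A_coeff_Suc_shift_alpha
    by (simp add: sum.distrib[symmetric] algebra_simps)
  also have "(\<Sum>k<N. real k * ?m k * \<beta> * ?c (k - 1) * x ^ k)
      = (\<Sum>k<Suc n. real (Suc k) * ?m (Suc k) * \<beta> * ?c k * x ^ Suc k)"
    unfolding N_def sum.lessThan_Suc_shift[of _ "Suc n"] by simp
  also have "\<dots> = x * real l * \<beta> * A n (l + 1) x \<alpha> \<beta> \<gamma>"
    unfolding multichoose_Suc_mult A_eq_sum_A_coeff[OF lessI]
    by (simp add: sum_distrib_left algebra_simps)
  also have "(\<Sum>k<N. ?m k * (\<gamma> - \<alpha> + real k * \<beta>) * ?c k * x ^ k)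
      = (\<gamma> - \<alpha> - real l * \<beta>) * A n l x \<alpha> \<beta> \<gamma> + real l * \<beta> * A n (l + 1) x \<alpha> \<beta> \<gamma>"
  proof -
    have split: "?m k * (\<gamma> - \<alpha> + real k * \<beta>) * ?c k * x ^ k
        = (\<gamma> - \<alpha> - real l * \<beta>) * (?m k * ?c k * x ^ k)
          + real l * \<beta> * (multichoose (l + 1) k * ?c k * x ^ k)" for k
    proof -
      have "?m k * (\<gamma> - \<alpha> + real k * \<beta>) * ?c k * x ^ k
          = (\<gamma> - \<alpha> - real l * \<beta>) * (?m k * ?c k * x ^ k)
            + \<beta> * ((real k + real l) * ?m k) * (?c k * x ^ k)"
        by (simp add: algebra_simps)
      then show ?thesis
        unfolding multichoose_mult by (simp add: algebra_simps)
    qed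
    show ?thesis
      unfolding A_eq_sum_A_coeff[OF \<open>n < N\<close>] by (simp only: split sum.distrib sum_distrib_left)
  qed
  finally show ?thesis by (simp add: algebra_simps)
qed

theorem theorem8:
  fixes \<alpha> \<beta> \<gamma> x :: real and l n :: nat
  shows "(x * A n (l + 1) x \<alpha> \<beta> (\<gamma> + \<beta>)
           = (x + 1) * A n (l + 1) x \<alpha> \<beta> \<gamma> - A n l x \<alpha> \<beta> \<gamma>) \<and>
         (A (n + 1) l x \<alpha> \<beta> (\<gamma> - \<alpha>) - (x + 1) * real l * \<beta> * A n (l + 1) x \<alpha> \<beta> \<gamma>
           = (\<gamma> - \<alpha> - real l * \<beta>) * A n l x \<alpha> \<beta> \<gamma>)"
  using A_shift_beta A_Suc_shift_alpha by blast

end
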